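(* Let $q$, $T_q$, $P^2_q$, $\Delta$ be as in the context and let $\varepsilon:T_q\to\mathbb C$ be the continuous linear map with $\varepsilon(U^kV^\ell)=q^{k\ell/2}$ for all $k,\ell\in\mathbb Z$. Then $\varepsilon$ is a counit for $\Delta$: $(\varepsilon,\mathrm{Id})\circ\Delta=\mathrm{Id}_{T_q}=(\mathrm{Id},\varepsilon)\circ\Delta$, where $(\varepsilon,\mathrm{Id}),(\mathrm{Id},\varepsilon):P^2_q\to T_q$ are the continuous linear maps with $(\varepsilon,\mathrm{Id})(U_1^kV_1^\ell U_2^mV_2^n)=q^{k\ell/2}U^mV^n$ and $(\mathrm{Id},\varepsilon)(U_1^kV_1^\ell U_2^mV_2^n)=q^{mn/2}U^kV^\ell$.
   Context: Fix $q\in\mathbb C$ with $|q|=1$ and a square root $q^{1/2}$; $q^{r/2}:=(q^{1/2})^r$. $\mathcal S(\mathbb Z^d,\mathbb C)$ denotes the Fréchet space of complex Schwartz sequences on $\mathbb Z^d$, $\delta^a$ the sequence equal to $1$ at $a$ and $0$ elsewhere. $T_q$ is $\mathcal S(\mathbb Z^2,\mathbb C)$ with continuous multiplication $\delta^{m,n}\delta^{k,\ell}=q^{-kn}\delta^{m+k,n+\ell}$; with $U=\delta^{1,0}$, $V=\delta^{0,1}$ one has $\delta^{m,n}=U^mV^n$ and $UV=qVU$. $P^2_q$ is $\mathcal S(\mathbb Z^4,\mathbb C)$ with continuous multiplication $\delta^{k_1,\ell_1,m_1,n_1}\delta^{k_2,\ell_2,m_2,n_2}=q^{\frac{k_2n_1}{2}-k_2\ell_1-\frac{m_1\ell_2}{2}-m_1n_2}\delta^{k_1+k_2,\ell_1+\ell_2,m_1+m_2,n_1+n_2}$;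 with $U_1=\delta^{1,0,0,0}$, $V_1=\delta^{0,1,0,0}$, $U_2=\delta^{0,0,1,0}$, $V_2=\delta^{0,0,0,1}$ one has $\delta^{k,\ell,m,n}=U_1^kV_1^\ell U_2^mV_2^n$. $\Delta:T_q\to P^2_q$ is the continuous algebra homomorphism with $\Delta(U)=U_1U_2$, $\Delta(V)=V_1V_2$. *)

theory Defs
  imports "HOL-Analysis.Analysis"
begin

text \<open>Index sets: Z^2 as int \<times> int, Z^4 as int \<times> int \<times> int \<times> int.
  Elements of T_q and P^2_q are complex-valued functions on these index sets
  lying in the Schwartz space.\<close>

type_synonym idx2 = "int \<times> int"
type_synonym idx4 = "int \<times> int \<times> int \<times> int"

definition nrm2 :: "idx2 \<Rightarrow> real" where
  "nrm2 a = \<bar>real_of_int (fst a)\<bar> + \<bar>real_of_int (snd a)\<bar>"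

definition nrm4 :: "idx4 \<Rightarrow> real" where
  "nrm4 a = (case a of (k, l, m, n) \<Rightarrow>
     \<bar>real_of_int k\<bar> + \<bar>real_of_int l\<bar> + \<bar>real_of_int m\<bar> + \<bar>real_of_int n\<bar>)"

definition schwartz :: "('a \<Rightarrow> real) \<Rightarrow> ('a \<Rightarrow> complex) set" where
  "schwartz nrm = {f. \<forall>N::nat. bdd_above (range (\<lambda>a. (1 + nrm a) ^ N * cmod (f a)))}"

definition seminorm_S :: "('a \<Rightarrow> real) \<Rightarrow> nat \<Rightarrow> ('a \<Rightarrow> complex) \<Rightarrow> real" where
  "seminorm_S nrm N f = (SUP a. (1 + nrm a) ^ N * cmod (f a))"

definition delta :: "'a \<Rightarrow> 'a \<Rightarrow> complex" where
  "delta a = (\<lambda>x. if x = a then 1 else 0)"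

text \<open>Linear maps between Schwartz spaces and their continuity (for the Frechet
  topologies given by the Schwartz seminorms: the standard seminorm criterion).\<close>

definition lin_on :: "('a \<Rightarrow> complex) set \<Rightarrow> (('a \<Rightarrow> complex) \<Rightarrow> ('b \<Rightarrow> complex)) \<Rightarrow> bool" where
  "lin_on S T \<longleftrightarrow> (\<forall>f\<in>S. \<forall>g\<in>S. T (\<lambda>x. f x + g x) = (\<lambda>y. T f y + T g y)) \<and>
                   (\<forall>f\<in>S. \<forall>c. T (\<lambda>x. c * f x) = (\<lambda>y. c * T f y))"

definition cont_lin_map :: "('a \<Rightarrow> real) \<Rightarrow> ('b \<Rightarrow> real)
     \<Rightarrow> (('a \<Rightarrow> complex) \<Rightarrow> ('b \<Rightarrow> complex)) \<Rightarrow> bool" where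
  "cont_lin_map nA nB T \<longleftrightarrow>
     (\<forall>f\<in>schwartz nA. T f \<in> schwartz nB) \<and> lin_on (schwartz nA) T \<and>
     (\<forall>N. \<exists>M C. \<forall>f\<in>schwartz nA. seminorm_S nB N (T f) \<le> C * seminorm_S nA M f)"

definition cont_lin_functional :: "('a \<Rightarrow> real) \<Rightarrow> (('a \<Rightarrow> complex) \<Rightarrow> complex) \<Rightarrow> bool" where
  "cont_lin_functional nA e \<longleftrightarrow>
     (\<forall>f\<in>schwartz nA. \<forall>g\<in>schwartz nA. e (\<lambda>x. f x + g x) = e f + e g) \<and>
     (\<forall>f\<in>schwartz nA. \<forall>c. e (\<lambda>x. c * f x) = c * e f) \<and>
     (\<exists>M C. \<forall>f\<in>schwartz nA. cmod (e f) \<le> C * seminorm_S nA M f)"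

text \<open>Multiplication of T_q (qh is the fixed square root of q; q^(r/2) = qh powi r):
  delta(m,n) * delta(k,l) = q^(-kn) delta(m+k,n+l), extended as twisted convolution.\<close>

definition phaseT :: "complex \<Rightarrow> idx2 \<Rightarrow> idx2 \<Rightarrow> complex" where
  "phaseT qh a b = qh powi (- 2 * fst b * snd a)"

definition multT :: "complex \<Rightarrow> (idx2 \<Rightarrow> complex) \<Rightarrow> (idx2 \<Rightarrow> complex) \<Rightarrow> idx2 \<Rightarrow> complex" where
  "multT qh f g c = (\<Sum>\<^sub>\<infinity>a\<in>UNIV. f a * g (fst c - fst a, snd c - snd a)
                        * phaseT qh a (fst c - fst a, snd c - snd a))"

definition phaseP :: "complex \<Rightarrow> idx4 \<Rightarrow> idx4 \<Rightarrow> complex" where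
  "phaseP qh a b = (case a of (k1, l1, m1, n1) \<Rightarrow> case b of (k2, l2, m2, n2) \<Rightarrow>
      qh powi (k2 * n1 - 2 * k2 * l1 - m1 * l2 - 2 * m2 * n1))"

definition sub4 :: "idx4 \<Rightarrow> idx4 \<Rightarrow> idx4" where
  "sub4 c a = (case c of (k, l, m, n) \<Rightarrow> case a of (k', l', m', n') \<Rightarrow>
      (k - k', l - l', m - m', n - n'))"

definition multP :: "complex \<Rightarrow> (idx4 \<Rightarrow> complex) \<Rightarrow> (idx4 \<Rightarrow> complex) \<Rightarrow> idx4 \<Rightarrow> complex" where
  "multP qh f g c = (\<Sum>\<^sub>\<infinity>a\<in>UNIV. f a * g (sub4 c a) * phaseP qh a (sub4 c a))"

definition genU :: "idx2 \<Rightarrow> complex" where "genU = delta (1, 0)"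
definition genV :: "idx2 \<Rightarrow> complex" where "genV = delta (0, 1)"
definition genU1 :: "idx4 \<Rightarrow> complex" where "genU1 = delta (1, 0, 0, 0)"
definition genV1 :: "idx4 \<Rightarrow> complex" where "genV1 = delta (0, 1, 0, 0)"
definition genU2 :: "idx4 \<Rightarrow> complex" where "genU2 = delta (0, 0, 1, 0)"
definition genV2 :: "idx4 \<Rightarrow> complex" where "genV2 = delta (0, 0, 0, 1)"

end

theory Submission
  imports Defs
begin

text \<open>Multiplicativity of \<Delta> and its values on the generators force
  \<Delta>(U^k V^l) = q^(-kl/2) U1^k V1^l U2^k V2^l: the recursions in k and l can be run
  backwards because left multiplication by a basis vector of P^2_q is injective. Hence both
  (\<epsilon>,Id) \<circ> \<Delta> and (Id,\<epsilon>) \<circ> \<Delta> fix every basis vector of T_q. A continuous linear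
  map on Schwartz sequences is determined by its values on basis vectors, because the part
  of a Schwartz sequence outside a large finite box is small in every seminorm.\<close>

lemma int_recurrence_unique:
  fixes P Q :: "int \<Rightarrow> 'a"
  assumes "inj g"
    and P: "\<And>i. P (i + 1) = g (P i)" and Q: "\<And>i. Q (i + 1) = g (Q i)"
    and "P j = Q j"
  shows "P i = Q i"
proof (induction i rule: int_induct[where k = j])
  case base
  show ?case by fact
next
  case (step1 i)
  then show ?case by (simp add: P Q)
next
  case (step2 i)
  then have "g (P (i - 1)) = g (Q (i - 1))"
    using P[of "i - 1"] Q[of "i - 1"] by simp
  with \<open>inj g\<close> show ?case by (simp add: inj_eq)
qed

lemma multT_delta_left:
  "multT qh (delta a) g c
     = g (fst c - fst a, snd c - snd a) * phaseT qh a (fst c - fst a, snd c - snd a)"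
proof -
  have "multT qh (delta a) g c = (\<Sum>\<^sub>\<infinity>b\<in>{a}. delta a b * g (fst c - fst b, snd c - snd b)
          * phaseT qh b (fst c - fst b, snd c - snd b))"
    unfolding multT_def by (rule infsum_cong_neutral) (auto simp: delta_def)
  then show ?thesis by (simp add: delta_def)
qed

lemma multT_delta_delta:
  "multT qh (delta (k, l)) (delta (k', l'))
     = (\<lambda>c. phaseT qh (k, l) (k', l') * delta (k + k', l + l') c)"
proof
  fix c :: idx2
  show "multT qh (delta (k, l)) (delta (k', l')) c
          = phaseT qh (k, l) (k', l') * delta (k + k', l + l') c"
    unfolding multT_delta_left by (cases c) (auto simp: delta_def)
qed

lemma multP_delta_left:
  "multP qh (delta a) g c = g (sub4 c a) * phaseP qh a (sub4 c a)"
proof -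
  have "multP qh (delta a) g c = (\<Sum>\<^sub>\<infinity>b\<in>{a}. delta a b * g (sub4 c b) * phaseP qh b (sub4 c b))"
    unfolding multP_def by (rule infsum_cong_neutral) (auto simp: delta_def)
  then show ?thesis by (simp add: delta_def)
qed

lemma multP_delta_scaled_delta:
  "multP qh (delta (k, l, m, n)) (\<lambda>c. s * delta (k', l', m', n') c)
     = (\<lambda>c. s * phaseP qh (k, l, m, n) (k', l', m', n') * delta (k + k', l + l', m + m', n + n') c)"
proof
  fix c :: idx4
  show "multP qh (delta (k, l, m, n)) (\<lambda>c. s * delta (k', l', m', n') c) c
          = s * phaseP qh (k, l, m, n) (k', l', m', n') * delta (k + k', l + l', m + m', n + n') c"
    unfolding multP_delta_left by (cases c) (auto simp: delta_def sub4_def)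
qed

lemma multP_delta_delta:
  "multP qh (delta (k, l, m, n)) (delta (k', l', m', n'))
     = (\<lambda>c. phaseP qh (k, l, m, n) (k', l', m', n') * delta (k + k', l + l', m + m', n + n') c)"
  using multP_delta_scaled_delta[of qh k l m n 1] by simp

lemma inj_multP_delta:
  assumes "qh \<noteq> 0"
  shows "inj (multP qh (delta a))"
proof (rule injI)
  fix g1 g2 :: "idx4 \<Rightarrow> complex"
  assume eq: "multP qh (delta a) g1 = multP qh (delta a) g2"
  show "g1 = g2"
  proof
    fix b :: idx4
    obtain k l m n where a: "a = (k, l, m, n)" by (cases a)
    obtain k' l' m' n' where b: "b = (k', l', m', n')" by (cases b)
    have "sub4 (k + k', l + l', m + m', n + n') a = b" by (simp add: a b sub4_def)
    then have "g1 b * phaseP qh a b = g2 b * phaseP qh a b"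
      using fun_cong[OF eq, of "(k + k', l + l', m + m', n + n')"] by (simp add: multP_delta_left)
    moreover have "phaseP qh a b \<noteq> 0" using assms by (simp add: phaseP_def a b)
    ultimately show "g1 b = g2 b" by simp
  qed
qed

lemma finite_support_in_schwartz:
  assumes "finite {a. f a \<noteq> 0}"
  shows "f \<in> schwartz nrm"
  unfolding schwartz_def
proof safe
  fix N :: nat
  let ?h = "\<lambda>a. (1 + nrm a) ^ N * cmod (f a)"
  have "range ?h \<subseteq> insert 0 (?h ` {a. f a \<noteq> 0})" by auto
  moreover have "finite (insert 0 (?h ` {a. f a \<noteq> 0}))" using assms by simp
  ultimately show "bdd_above (range ?h)" by (meson bdd_above_finite bdd_above_mono)
qed

lemma delta_in_schwartz: "delta a \<in> schwartz nrm"
  by (rule finite_support_in_schwartz) (simp add: delta_def)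

lemma comult_delta_steps:
  fixes \<Delta> :: "(idx2 \<Rightarrow> complex) \<Rightarrow> (idx4 \<Rightarrow> complex)"
  assumes mult: "\<forall>f\<in>schwartz nrm2. \<forall>g\<in>schwartz nrm2.
                 \<Delta> (multT qh f g) = multP qh (\<Delta> f) (\<Delta> g)"
    and U: "\<Delta> genU = multP qh genU1 genU2"
    and V: "\<Delta> genV = multP qh genV1 genV2"
  shows "\<Delta> (delta (1, 0)) = delta (1, 0, 1, 0)"
    and "\<Delta> (delta (k + 1, l)) = multP qh (delta (1, 0, 1, 0)) (\<Delta> (delta (k, l)))"
    and "\<Delta> (delta (0, l + 1)) = multP qh (delta (0, 1, 0, 1)) (\<Delta> (delta (0, l)))"
proof -
  show \<Delta>U: "\<Delta> (delta (1, 0)) = delta (1, 0, 1, 0)"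
    using U by (simp add: genU_def genU1_def genU2_def multP_delta_delta phaseP_def)
  moreover have "delta (k + 1, l) = multT qh (delta (1, 0)) (delta (k, l))"
    by (simp add: multT_delta_delta phaseT_def add.commute)
  ultimately show "\<Delta> (delta (k + 1, l)) = multP qh (delta (1, 0, 1, 0)) (\<Delta> (delta (k, l)))"
    using mult delta_in_schwartz by metis
next
  have "\<Delta> (delta (0, 1)) = delta (0, 1, 0, 1)"
    using V by (simp add: genV_def genV1_def genV2_def multP_delta_delta phaseP_def)
  moreover have "delta (0, l + 1) = multT qh (delta (0, 1)) (delta (0, l))"
    by (simp add: multT_delta_delta phaseT_def add.commute)
  ultimately show "\<Delta> (delta (0, l + 1)) = multP qh (delta (0, 1, 0, 1)) (\<Delta> (delta (0, l)))"
    using mult delta_in_schwartz by metis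
qed

lemma comult_delta:
  fixes \<Delta> :: "(idx2 \<Rightarrow> complex) \<Rightarrow> (idx4 \<Rightarrow> complex)"
  assumes "qh \<noteq> 0"
    and mult: "\<forall>f\<in>schwartz nrm2. \<forall>g\<in>schwartz nrm2.
                 \<Delta> (multT qh f g) = multP qh (\<Delta> f) (\<Delta> g)"
    and U: "\<Delta> genU = multP qh genU1 genU2"
    and V: "\<Delta> genV = multP qh genV1 genV2"
  shows "\<Delta> (delta (k, l)) = (\<lambda>c. qh powi (- (k * l)) * delta (k, l, k, l) c)"
proof -
  define Y where "Y k l = (\<lambda>c. qh powi (- (k * l)) * delta (k, l, k, l) c)" for k l
  define mU where "mU = multP qh (delta (1, 0, 1, 0))"
  define mV where "mV = multP qh (delta (0, 1, 0, 1))"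
  have "inj mU" "inj mV"
    unfolding mU_def mV_def using inj_multP_delta[OF \<open>qh \<noteq> 0\<close>] by auto
  note \<Delta>_steps = comult_delta_steps[OF mult U V, folded mU_def mV_def]
  have "qh powi (- (k * l)) * qh powi (- l) = qh powi (- ((k + 1) * l))" for k l
    using \<open>qh \<noteq> 0\<close> by (simp add: power_int_add[symmetric] algebra_simps)
  then have Y_U_step: "Y (k + 1) l = mU (Y k l)" for k l
    by (simp add: Y_def mU_def multP_delta_scaled_delta phaseP_def add.commute)
  have Y_V_step: "Y 0 (l + 1) = mV (Y 0 l)" for l
    by (simp add: Y_def mV_def multP_delta_delta phaseP_def add.commute)
  have Y_1_0: "Y 1 0 = \<Delta> (delta (1, 0))" by (simp add: Y_def \<Delta>_steps(1))
  have row0: "\<Delta> (delta (k, 0)) = Y k 0" for k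
    by (rule int_recurrence_unique[where P = "\<lambda>k. \<Delta> (delta (k, 0))" and Q = "\<lambda>k. Y k 0"
          and j = 1, OF \<open>inj mU\<close>]) (simp_all add: \<Delta>_steps Y_U_step Y_1_0)
  have column0: "\<Delta> (delta (0, l)) = Y 0 l" for l
    by (rule int_recurrence_unique[where P = "\<lambda>l. \<Delta> (delta (0, l))" and Q = "Y 0"
          and j = 0, OF \<open>inj mV\<close>]) (simp_all add: \<Delta>_steps Y_V_step row0)
  have "\<Delta> (delta (k, l)) = Y k l"
    by (rule int_recurrence_unique[where P = "\<lambda>k. \<Delta> (delta (k, l))" and Q = "\<lambda>k. Y k l"
          and j = 0, OF \<open>inj mU\<close>]) (simp_all add: \<Delta>_steps Y_U_step column0)
  then show ?thesis by (simp add: Y_def)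
qed

lemma schwartz_restrict:
  assumes "f \<in> schwartz nrm"
  shows "(\<lambda>a. if P a then f a else 0) \<in> schwartz nrm"
  unfolding schwartz_def
proof safe
  fix N :: nat
  obtain B where B: "\<And>a. (1 + nrm a) ^ N * cmod (f a) \<le> B"
    using assms unfolding schwartz_def bdd_above_def by blast
  show "bdd_above (range (\<lambda>a. (1 + nrm a) ^ N * cmod (if P a then f a else 0)))"
    using B by (intro bdd_aboveI2[where M = "max B 0"]) (simp add: le_max_iff_disj)
qed

lemma seminorm_S_upper:
  assumes "f \<in> schwartz nrm"
  shows "(1 + nrm a) ^ N * cmod (f a) \<le> seminorm_S nrm N f"
  unfolding seminorm_S_def
  by (rule cSUP_upper) (use assms in \<open>auto simp: schwartz_def\<close>)

lemma seminorm_S_nonneg: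
  assumes "f \<in> schwartz nrm" and "\<And>a. 0 \<le> nrm a"
  shows "0 \<le> seminorm_S nrm N f"
proof -
  fix a
  have "0 \<le> (1 + nrm a) ^ N * cmod (f a)"
    using assms(2)[of a] by simp
  also have "\<dots> \<le> seminorm_S nrm N f"
    by (rule seminorm_S_upper[OF assms(1)])
  finally show ?thesis .
qed

lemma seminorm_S_tail_le:
  assumes f: "f \<in> schwartz nrm" and nonneg: "\<And>a. 0 \<le> nrm a" and "0 \<le> R"
  shows "seminorm_S nrm N (\<lambda>a. if nrm a \<le> R then 0 else f a)
           \<le> seminorm_S nrm (Suc N) f / (1 + R)"
  unfolding seminorm_S_def[of nrm N]
proof (rule cSUP_least)
  fix a
  show "(1 + nrm a) ^ N * cmod (if nrm a \<le> R then 0 else f a)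
          \<le> seminorm_S nrm (Suc N) f / (1 + R)"
  proof (cases "nrm a \<le> R")
    case True
    then show ?thesis using seminorm_S_nonneg[OF f nonneg] \<open>0 \<le> R\<close> by simp
  next
    case False
    have "(1 + nrm a) ^ N * cmod (f a) * (1 + R) \<le> (1 + nrm a) ^ N * cmod (f a) * (1 + nrm a)"
      using False nonneg[of a] by (intro mult_left_mono) auto
    also have "\<dots> \<le> seminorm_S nrm (Suc N) f"
      using seminorm_S_upper[OF f, of a "Suc N"] by (simp add: algebra_simps)
    finally show ?thesis using False \<open>0 \<le> R\<close> by (simp add: pos_le_divide_eq)
  qed
qed simp

lemma lin_on_add:
  "lin_on S T \<Longrightarrow> f \<in> S \<Longrightarrow> g \<in> S \<Longrightarrow> T (\<lambda>x. f x + g x) = (\<lambda>y. T f y + T g y)"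
  unfolding lin_on_def by blast

lemma lin_on_scale:
  "lin_on S T \<Longrightarrow> f \<in> S \<Longrightarrow> T (\<lambda>x. c * f x) = (\<lambda>y. c * T f y)"
  unfolding lin_on_def by blast

lemma lin_on_sum_deltas:
  assumes lin: "lin_on (schwartz nrm) T" and "finite A"
  shows "T (\<lambda>x. \<Sum>a\<in>A. c a * delta a x) = (\<lambda>x. \<Sum>a\<in>A. c a * T (delta a) x)"
  using \<open>finite A\<close>
proof (induction A rule: finite_induct)
  case empty
  have "T (\<lambda>x. 0 * delta undefined x) = (\<lambda>y. 0 * T (delta undefined) y)"
    by (rule lin_on_scale[OF lin delta_in_schwartz])
  then show ?case by simp
next
  case (insert b A)
  let ?s = "\<lambda>x. \<Sum>a\<in>A. c a * delta a x"
  have "?s x = 0" if "x \<notin> A" for x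
    using that by (auto simp: delta_def intro!: sum.neutral)
  then have "{x. ?s x \<noteq> 0} \<subseteq> A" by blast
  then have "?s \<in> schwartz nrm"
    by (intro finite_support_in_schwartz finite_subset[OF _ insert.hyps(1)])
  moreover have "(\<lambda>x. c b * delta b x) \<in> schwartz nrm"
    by (rule finite_support_in_schwartz, rule finite_subset[of _ "{b}"]) (auto simp: delta_def)
  ultimately have "T (\<lambda>x. c b * delta b x + ?s x) = (\<lambda>y. T (\<lambda>x. c b * delta b x) y + T ?s y)"
    by (intro lin_on_add[OF lin])
  moreover have "T (\<lambda>x. c b * delta b x) = (\<lambda>y. c b * T (delta b) y)"
    by (rule lin_on_scale[OF lin delta_in_schwartz])
  ultimately show ?case using insert by simp
qed

lemma lin_on_eq_on_finite_support:
  assumes lin1: "lin_on (schwartz nrm) T1" and lin2: "lin_on (schwartz nrm) T2"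
    and deltas: "\<And>a. T1 (delta a) = T2 (delta a)"
    and fin: "finite {a. f a \<noteq> 0}"
  shows "T1 f = T2 f"
proof -
  define A where "A = {a. f a \<noteq> 0}"
  have "(\<Sum>a\<in>A. f a * delta a x) = f x" for x
  proof -
    have "(\<Sum>a\<in>A. f a * delta a x) = (\<Sum>a\<in>A. if a = x then f a else 0)"
      by (rule sum.cong) (auto simp: delta_def)
    also have "\<dots> = f x" using fin by (simp add: A_def)
    finally show ?thesis .
  qed
  then have f_eq: "f = (\<lambda>x. \<Sum>a\<in>A. f a * delta a x)" by simp
  have "T1 f = T1 (\<lambda>x. \<Sum>a\<in>A. f a * delta a x)" by (rule arg_cong[OF f_eq])
  also have "\<dots> = (\<lambda>x. \<Sum>a\<in>A. f a * T2 (delta a) x)"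
    using lin_on_sum_deltas[OF lin1] fin by (simp add: A_def deltas)
  also have "\<dots> = T2 (\<lambda>x. \<Sum>a\<in>A. f a * delta a x)"
    using lin_on_sum_deltas[OF lin2] fin by (simp add: A_def)
  also have "\<dots> = T2 f" by (rule arg_cong[OF f_eq[symmetric]])
  finally show ?thesis .
qed

lemma cont_lin_map_pointwise_bound:
  assumes T: "cont_lin_map nA nB T" and nonneg: "\<And>a. 0 \<le> nA a"
  shows "\<exists>C M. 0 \<le> C \<and> (\<forall>f\<in>schwartz nA. \<forall>x. cmod (T f x) \<le> C * seminorm_S nA M f)"
proof -
  obtain M C where bound: "\<And>f. f \<in> schwartz nA \<Longrightarrow> seminorm_S nB 0 (T f) \<le> C * seminorm_S nA M f"
    using T unfolding cont_lin_map_def by blast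
  have "cmod (T f x) \<le> max C 0 * seminorm_S nA M f" if f: "f \<in> schwartz nA" for f x
  proof -
    have "T f \<in> schwartz nB" using T f unfolding cont_lin_map_def by blast
    then have "cmod (T f x) \<le> seminorm_S nB 0 (T f)"
      using seminorm_S_upper[of "T f" nB x 0] by simp
    also have "\<dots> \<le> C * seminorm_S nA M f" by (rule bound[OF f])
    also have "\<dots> \<le> max C 0 * seminorm_S nA M f"
      using seminorm_S_nonneg[OF f nonneg] by (intro mult_right_mono) auto
    finally show ?thesis .
  qed
  then show ?thesis by (intro exI[of _ "max C 0"]) auto
qed

lemma cont_lin_map_id: "cont_lin_map n n (\<lambda>f. f)"
  unfolding cont_lin_map_def lin_on_def by (metis mult_1 order_refl)

lemma cont_lin_map_comp:
  assumes S: "cont_lin_map nA nB S" and T: "cont_lin_map nB nC T"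
    and nonneg: "\<And>b. 0 \<le> nB b"
  shows "cont_lin_map nA nC (\<lambda>f. T (S f))"
proof -
  have S_into: "\<And>f. f \<in> schwartz nA \<Longrightarrow> S f \<in> schwartz nB"
    and S_lin: "lin_on (schwartz nA) S"
    and T_into: "\<And>g. g \<in> schwartz nB \<Longrightarrow> T g \<in> schwartz nC"
    and T_lin: "lin_on (schwartz nB) T"
    using S T unfolding cont_lin_map_def by auto
  have "lin_on (schwartz nA) (\<lambda>f. T (S f))"
    unfolding lin_on_def
    by (simp add: lin_on_add[OF S_lin] lin_on_add[OF T_lin] lin_on_scale[OF S_lin]
        lin_on_scale[OF T_lin] S_into)
  moreover have "\<exists>M C. \<forall>f\<in>schwartz nA. seminorm_S nC N (T (S f)) \<le> C * seminorm_S nA M f" for N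
  proof -
    obtain C1 M1 where T_bound:
      "\<And>g. g \<in> schwartz nB \<Longrightarrow> seminorm_S nC N (T g) \<le> C1 * seminorm_S nB M1 g"
      using T unfolding cont_lin_map_def by blast
    obtain M2 C2 where S_bound:
      "\<And>f. f \<in> schwartz nA \<Longrightarrow> seminorm_S nB M1 (S f) \<le> C2 * seminorm_S nA M2 f"
      using S unfolding cont_lin_map_def by blast
    have "seminorm_S nC N (T (S f)) \<le> (max C1 0 * C2) * seminorm_S nA M2 f"
      if f: "f \<in> schwartz nA" for f
    proof -
      have "seminorm_S nC N (T (S f)) \<le> C1 * seminorm_S nB M1 (S f)"
        by (rule T_bound[OF S_into[OF f]])
      also have "\<dots> \<le> max C1 0 * seminorm_S nB M1 (S f)"
        using seminorm_S_nonneg[OF S_into[OF f] nonneg] by (intro mult_right_mono) auto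
      also have "\<dots> \<le> max C1 0 * (C2 * seminorm_S nA M2 f)"
        by (intro mult_left_mono S_bound[OF f]) auto
      finally show ?thesis by (simp add: mult.assoc)
    qed
    then show ?thesis by blast
  qed
  ultimately show ?thesis using S_into T_into unfolding cont_lin_map_def by blast
qed

lemma lin_on_diff_eq_on_tail:
  assumes lin1: "lin_on (schwartz nA) T1" and lin2: "lin_on (schwartz nA) T2"
    and deltas: "\<And>a. T1 (delta a) = T2 (delta a)"
    and sublevel_finite: "finite {a. nA a \<le> R}"
    and f: "f \<in> schwartz nA"
  defines "tail \<equiv> \<lambda>a. if nA a \<le> R then 0 else f a"
  shows "tail \<in> schwartz nA" and "T1 f x - T2 f x = T1 tail x - T2 tail x"
proof -
  define head where "head = (\<lambda>a. if nA a \<le> R then f a else 0)"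
  have "tail = (\<lambda>a. if \<not> nA a \<le> R then f a else 0)" by (auto simp: tail_def)
  then show tail: "tail \<in> schwartz nA" by (simp only: schwartz_restrict[OF f])
  have head_finite: "finite {a. head a \<noteq> 0}"
    by (rule finite_subset[OF _ sublevel_finite]) (auto simp: head_def)
  have head: "head \<in> schwartz nA" by (rule finite_support_in_schwartz[OF head_finite])
  have "T1 head = T2 head"
    by (rule lin_on_eq_on_finite_support[OF lin1 lin2 deltas head_finite])
  moreover have "f = (\<lambda>a. tail a + head a)" by (auto simp: tail_def head_def)
  ultimately show "T1 f x - T2 f x = T1 tail x - T2 tail x"
    by (simp add: lin_on_add[OF lin1 tail head] lin_on_add[OF lin2 tail head])
qed

lemma cont_lin_map_eq_on_deltas:
  assumes T1: "cont_lin_map nA nB T1" and T2: "cont_lin_map nA nB T2"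
    and deltas: "\<And>a. T1 (delta a) = T2 (delta a)"
    and nonneg: "\<And>a. 0 \<le> nA a" and sublevel_finite: "\<And>R. finite {a. nA a \<le> R}"
    and f: "f \<in> schwartz nA"
  shows "T1 f = T2 f"
proof
  fix x
  obtain C1 M1 where "0 \<le> C1"
    and T1_bound: "\<And>g y. g \<in> schwartz nA \<Longrightarrow> cmod (T1 g y) \<le> C1 * seminorm_S nA M1 g"
    using cont_lin_map_pointwise_bound[OF T1 nonneg] by blast
  obtain C2 M2 where "0 \<le> C2"
    and T2_bound: "\<And>g y. g \<in> schwartz nA \<Longrightarrow> cmod (T2 g y) \<le> C2 * seminorm_S nA M2 g"
    using cont_lin_map_pointwise_bound[OF T2 nonneg] by blast
  have lin1: "lin_on (schwartz nA) T1" and lin2: "lin_on (schwartz nA) T2"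
    using T1 T2 unfolding cont_lin_map_def by auto
  define K where "K = C1 * seminorm_S nA (Suc M1) f + C2 * seminorm_S nA (Suc M2) f"
  have "cmod (T1 f x - T2 f x) \<le> K / (1 + R)" if "0 \<le> R" for R
  proof -
    define tail where "tail = (\<lambda>a. if nA a \<le> R then 0 else f a)"
    note tail = lin_on_diff_eq_on_tail[OF lin1 lin2 deltas sublevel_finite[of R] f, folded tail_def]
    have "cmod (T1 f x - T2 f x) \<le> cmod (T1 tail x) + cmod (T2 tail x)"
      unfolding tail(2) by (rule norm_triangle_ineq4)
    also have "\<dots> \<le> C1 * seminorm_S nA M1 tail + C2 * seminorm_S nA M2 tail"
      by (intro add_mono T1_bound T2_bound tail(1))
    also have "\<dots> \<le> C1 * (seminorm_S nA (Suc M1) f / (1 + R))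
                    + C2 * (seminorm_S nA (Suc M2) f / (1 + R))"
      unfolding tail_def
      by (intro add_mono mult_left_mono seminorm_S_tail_le f nonneg \<open>0 \<le> R\<close> \<open>0 \<le> C1\<close> \<open>0 \<le> C2\<close>)
    also have "\<dots> = K / (1 + R)" by (simp add: K_def add_divide_distrib)
    finally show ?thesis .
  qed
  then have "eventually (\<lambda>R. cmod (T1 f x - T2 f x) \<le> K / (1 + R)) at_top"
    by (intro eventually_at_top_linorderI[of 0]) auto
  moreover have "((\<lambda>R. K / (1 + R)) \<longlongrightarrow> 0) at_top"
    by (intro tendsto_divide_0[OF tendsto_const] filterlim_at_top_imp_at_infinity
        filterlim_tendsto_add_at_top[OF tendsto_const filterlim_ident])
  ultimately have "cmod (T1 f x - T2 f x) \<le> 0"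
    by (intro tendsto_lowerbound[of "\<lambda>R. K / (1 + R)"]) auto
  then show "T1 f x = T2 f x" by simp
qed

lemma nrm2_nonneg: "0 \<le> nrm2 a"
  by (simp add: nrm2_def)

lemma nrm4_nonneg: "0 \<le> nrm4 a"
  by (cases a) (simp add: nrm4_def)

lemma finite_nrm2_sublevel: "finite {a. nrm2 a \<le> R}"
proof -
  let ?r = "\<lceil>R\<rceil>"
  have "k \<in> {-?r..?r}" if "\<bar>real_of_int k\<bar> \<le> R" for k
    using that le_of_int_ceiling[of R] by auto linarith+
  then have "{a. nrm2 a \<le> R} \<subseteq> {-?r..?r} \<times> {-?r..?r}"
    by (auto simp: nrm2_def)
  then show ?thesis by (rule finite_subset) simp
qed

lemma comp_comult_eq_id:
  fixes \<Delta> :: "(idx2 \<Rightarrow> complex) \<Rightarrow> (idx4 \<Rightarrow> complex)"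
    and E :: "(idx4 \<Rightarrow> complex) \<Rightarrow> (idx2 \<Rightarrow> complex)"
  assumes "qh \<noteq> 0"
    and \<Delta>_delta: "\<And>k l. \<Delta> (delta (k, l)) = (\<lambda>c. qh powi (- (k * l)) * delta (k, l, k, l) c)"
    and \<Delta>_cont: "cont_lin_map nrm2 nrm4 \<Delta>" and E_cont: "cont_lin_map nrm4 nrm2 E"
    and E_delta: "\<And>k l. E (delta (k, l, k, l)) = (\<lambda>x. qh powi (k * l) * delta (k, l) x)"
    and f: "f \<in> schwartz nrm2"
  shows "E (\<Delta> f) = f"
proof (rule cont_lin_map_eq_on_deltas[OF _ cont_lin_map_id _ nrm2_nonneg finite_nrm2_sublevel f])
  show "cont_lin_map nrm2 nrm2 (\<lambda>f. E (\<Delta> f))"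
    by (rule cont_lin_map_comp[OF \<Delta>_cont E_cont nrm4_nonneg])
  show "E (\<Delta> (delta a)) = delta a" for a
  proof -
    obtain k l where a: "a = (k, l)" by (cases a)
    have inverse: "qh powi (- (k * l)) * qh powi (k * l) = 1"
      using \<open>qh \<noteq> 0\<close> by (simp add: power_int_minus)
    have "lin_on (schwartz nrm4) E" using E_cont unfolding cont_lin_map_def by blast
    then have "E (\<Delta> (delta a)) = (\<lambda>x. qh powi (- (k * l)) * E (delta (k, l, k, l)) x)"
      by (simp add: a \<Delta>_delta lin_on_scale delta_in_schwartz)
    also have "\<dots> = delta a"
      using inverse by (simp add: a E_delta mult.assoc[symmetric])
    finally show ?thesis .
  qed
qed

theorem mainTheorem3:
  fixes q qh :: complex
    and \<Delta> :: "(idx2 \<Rightarrow> complex) \<Rightarrow> (idx4 \<Rightarrow> complex)"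
    and \<epsilon> :: "(idx2 \<Rightarrow> complex) \<Rightarrow> complex"
    and \<epsilon>Id IdEps :: "(idx4 \<Rightarrow> complex) \<Rightarrow> (idx2 \<Rightarrow> complex)"
  assumes hq: "cmod q = 1"
    and hqh: "qh ^ 2 = q"
    and \<Delta>_cont: "cont_lin_map nrm2 nrm4 \<Delta>"
    and \<Delta>_mult: "\<forall>f\<in>schwartz nrm2. \<forall>g\<in>schwartz nrm2.
                    \<Delta> (multT qh f g) = multP qh (\<Delta> f) (\<Delta> g)"
    and \<Delta>_U: "\<Delta> genU = multP qh genU1 genU2"
    and \<Delta>_V: "\<Delta> genV = multP qh genV1 genV2"
    and \<epsilon>_cont: "cont_lin_functional nrm2 \<epsilon>"
    and \<epsilon>_val: "\<forall>k l. \<epsilon> (delta (k, l)) = qh powi (k * l)"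
    and \<epsilon>Id_cont: "cont_lin_map nrm4 nrm2 \<epsilon>Id"
    and \<epsilon>Id_val: "\<forall>k l m n. \<epsilon>Id (delta (k, l, m, n)) = (\<lambda>x. qh powi (k * l) * delta (m, n) x)"
    and IdEps_cont: "cont_lin_map nrm4 nrm2 IdEps"
    and IdEps_val: "\<forall>k l m n. IdEps (delta (k, l, m, n)) = (\<lambda>x. qh powi (m * n) * delta (k, l) x)"
  shows "\<forall>f\<in>schwartz nrm2. \<epsilon>Id (\<Delta> f) = f \<and> IdEps (\<Delta> f) = f"
proof -
  have "qh \<noteq> 0" using hq hqh by auto
  note \<Delta>_delta = comult_delta[OF \<open>qh \<noteq> 0\<close> \<Delta>_mult \<Delta>_U \<Delta>_V]
  show ?thesis
    using comp_comult_eq_id[OF \<open>qh \<noteq> 0\<close> \<Delta>_delta \<Delta>_cont \<epsilon>Id_cont]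
      comp_comult_eq_id[OF \<open>qh \<noteq> 0\<close> \<Delta>_delta \<Delta>_cont IdEps_cont] \<epsilon>Id_val IdEps_val
    by simp
qed

end
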